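(* Let $\mathcal{Z}\subset\mathbb{R}^n$ be closed and $f:\mathbb{R}^n\times\mathcal{Z}\to\mathbb{R}^n$ continuous. Then the set-valued map $z\mapsto\hat f(z):=f(z,P_\mathcal{Z}(z))=\{f(z,p):p\in P_\mathcal{Z}(z)\}$ is locally bounded and outer semicontinuous. Furthermore, if $\mathcal{Z}$ is $\alpha$-prox-regular for some $\alpha>0$, then $\hat f$ is single-valued and continuous on $\mathcal{Z}+\tfrac{1}{2\alpha}\operatorname{int}\mathbb{B}$.
   Context: $P_\mathcal{Z}(z):=\{\tilde z\in\mathcal{Z}:\|z-\tilde z\|=\inf_{y\in\mathcal{Z}}\|z-y\|\}$. $\operatorname{int}\mathbb{B}$ is the open unit ball. A Clarke regular closed set $\mathcal{Z}$ (i.e., $x\mapsto T_x\mathcal{Z}$ inner semicontinuous, with $T_x\mathcal{Z}$ the tangent cone and $N_x\mathcal{Z}$ its polar) is $\alpha$-prox-regular if for every $x\in\mathcal{Z}$ and every $\eta\in N_x\mathcal{Z}$, $\langle\eta,y-x\rangle\le\alpha\|\eta\|\|y-x\|^2$ for all $y\in\mathcal{Z}$. *)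

theory Defs
  imports "HOL-Analysis.Analysis"
begin

definition proj_set :: "('a::euclidean_space) set \<Rightarrow> 'a \<Rightarrow> 'a set" where
  "proj_set Z z = {p \<in> Z. norm (z - p) = infdist z Z}"

definition tangent_cone :: "('a::euclidean_space) set \<Rightarrow> 'a \<Rightarrow> 'a set" where
  "tangent_cone Z x = {v. \<exists>t u. (\<forall>k. t k > 0 \<and> x + t k *\<^sub>R u k \<in> Z)
                              \<and> t \<longlonglongrightarrow> 0 \<and> u \<longlonglongrightarrow> v}"

definition normal_cone :: "('a::euclidean_space) set \<Rightarrow> 'a \<Rightarrow> 'a set" where
  "normal_cone Z x = {\<eta>. \<forall>v \<in> tangent_cone Z x. \<eta> \<bullet> v \<le> 0}"

definition inner_semicontinuous_on :: "'a::metric_space set \<Rightarrow> ('a \<Rightarrow> 'b::metric_space set) \<Rightarrow> bool" where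
  "inner_semicontinuous_on S M \<longleftrightarrow>
     (\<forall>x \<in> S. \<forall>v \<in> M x. \<forall>e > 0. \<exists>d > 0. \<forall>y \<in> S. dist y x < d \<longrightarrow> (\<exists>w \<in> M y. dist w v < e))"

definition clarke_regular :: "('a::euclidean_space) set \<Rightarrow> bool" where
  "clarke_regular Z \<longleftrightarrow> closed Z \<and> inner_semicontinuous_on Z (tangent_cone Z)"

definition prox_regular :: "real \<Rightarrow> ('a::euclidean_space) set \<Rightarrow> bool" where
  "prox_regular \<alpha> Z \<longleftrightarrow> clarke_regular Z \<and>
     (\<forall>x \<in> Z. \<forall>\<eta> \<in> normal_cone Z x. \<forall>y \<in> Z.
        \<eta> \<bullet> (y - x) \<le> \<alpha> * norm \<eta> * (norm (y - x))\<^sup>2)"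

definition locally_bounded :: "('a::metric_space \<Rightarrow> 'b::metric_space set) \<Rightarrow> bool" where
  "locally_bounded M \<longleftrightarrow> (\<forall>x. \<exists>e > 0. bounded (\<Union>y \<in> ball x e. M y))"

definition outer_semicontinuous :: "('a::metric_space \<Rightarrow> 'b::metric_space set) \<Rightarrow> bool" where
  "outer_semicontinuous M \<longleftrightarrow>
     (\<forall>x y xs ys. xs \<longlonglongrightarrow> x \<longrightarrow> ys \<longlonglongrightarrow> y \<longrightarrow> (\<forall>i. ys i \<in> M (xs i)) \<longrightarrow> y \<in> M x)"

end

theory Submission
  imports Defs
begin

text \<open>Nearest points of z lie within distance d(z, Z) of z and the graph of the projection
is closed, so over a compact set of base points the graph is compact. Its image under f is then
compact, giving local boundedness, and extracting convergent subsequences in the graph gives outer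
semicontinuity. If Z is \<alpha>-prox-regular, z - p is a normal vector at each nearest point p of z,
and adding the prox-regularity inequalities for nearest points p1 of z1 and p2 of z2 gives
(1 - \<alpha> (d(z1, Z) + d(z2, Z))) |p1 - p2| \<le> |z1 - z2|. Where 2 \<alpha> d(z, Z) < 1 this makes
the nearest point unique and locally Lipschitz in z, so f(z, P(z)) is continuous there.\<close>

lemma proj_set_subset: "proj_set Z z \<subseteq> Z"
  by (auto simp: proj_set_def)

lemma proj_set_nonempty:
  fixes Z :: "'a::euclidean_space set"
  assumes "closed Z" "Z \<noteq> {}"
  shows "proj_set Z z \<noteq> {}"
proof -
  obtain p where "p \<in> Z" "infdist z Z = dist z p"
    using infdist_attains_inf[OF assms] by blast
  then show ?thesis
    unfolding proj_set_def by (auto simp: dist_norm)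
qed

lemma proj_set_subset_cball:
  fixes Z :: "'a::euclidean_space set"
  assumes "x \<in> Z"
  shows "proj_set Z z \<subseteq> cball z (dist z x)"
  using infdist_le[OF assms, of z] by (auto simp: proj_set_def dist_norm)

lemma compact_proj_set_graph:
  fixes Z :: "'a::euclidean_space set"
  assumes "closed Z" "compact K"
  shows "compact {(z, p). z \<in> K \<and> p \<in> proj_set Z z}"
proof (cases "Z = {}")
  case True
  then show ?thesis by (simp add: proj_set_def)
next
  case False
  then obtain x where x: "x \<in> Z" by blast
  obtain B where B: "\<And>z. z \<in> K \<Longrightarrow> norm z \<le> B"
    using compact_imp_bounded[OF assms(2)] bounded_iff by blast
  have "norm p \<le> 2 * B + norm x" if "z \<in> K" "p \<in> proj_set Z z" for z p
  proof -
    have "dist z p \<le> dist z x"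
      using proj_set_subset_cball[OF x, of z] that(2) by auto
    moreover have "norm p \<le> norm z + dist z p"
      by (metis dist_norm norm_minus_commute norm_triangle_sub)
    moreover have "dist z x \<le> norm z + norm x"
      by (simp add: dist_norm norm_triangle_ineq4)
    ultimately show ?thesis
      using B[OF that(1)] by linarith
  qed
  then have "{(z, p). z \<in> K \<and> p \<in> proj_set Z z} \<subseteq> K \<times> cball 0 (2 * B + norm x)"
    by fastforce
  then have "bounded {(z, p). z \<in> K \<and> p \<in> proj_set Z z}"
    by (rule bounded_subset[OF bounded_Times[OF compact_imp_bounded[OF assms(2)] bounded_cball]])
  have "{(z, p). z \<in> K \<and> p \<in> proj_set Z z}
      = (K \<times> Z) \<inter> {zp. norm (fst zp - snd zp) = infdist (fst zp) Z}"
    by (auto simp: proj_set_def)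
  moreover have "closed {zp. norm (fst zp - snd zp) = infdist (fst zp) Z}"
    by (intro closed_Collect_eq continuous_intros)
  ultimately have "closed {(z, p). z \<in> K \<and> p \<in> proj_set Z z}"
    using assms by (simp add: closed_Int closed_Times compact_imp_closed)
  then show ?thesis
    using \<open>bounded _\<close> by (simp add: compact_eq_bounded_closed)
qed

lemma proj_set_in_normal_cone:
  fixes Z :: "'a::euclidean_space set"
  assumes "p \<in> proj_set Z z"
  shows "z - p \<in> normal_cone Z p"
  unfolding normal_cone_def
proof clarify
  fix v assume "v \<in> tangent_cone Z p"
  then obtain t u where t_pos: "\<And>k. t k > 0" and in_Z: "\<And>k. p + t k *\<^sub>R u k \<in> Z"
    and t_lim: "t \<longlonglongrightarrow> 0" and u_lim: "u \<longlonglongrightarrow> v"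
    unfolding tangent_cone_def by blast
  have step: "2 * ((z - p) \<bullet> u k) \<le> t k * (norm (u k))\<^sup>2" for k
  proof -
    have "norm (z - p) \<le> norm (z - (p + t k *\<^sub>R u k))"
      using infdist_le[OF in_Z, of z k] assms by (simp add: proj_set_def dist_norm)
    then have "(norm (z - p))\<^sup>2 \<le> (norm (z - (p + t k *\<^sub>R u k)))\<^sup>2"
      by (simp add: power_mono)
    also have "\<dots> = (norm (z - p))\<^sup>2 - t k * (2 * ((z - p) \<bullet> u k)) + t k * (t k * (norm (u k))\<^sup>2)"
      unfolding power2_norm_eq_inner
      by (simp add: inner_diff_left inner_diff_right inner_add_left inner_add_right algebra_simps
          power2_eq_square inner_commute)
    finally show ?thesis
      using t_pos[of k] by simp
  qed
  have "(\<lambda>k. 2 * ((z - p) \<bullet> u k)) \<longlonglongrightarrow> 2 * ((z - p) \<bullet> v)"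
    by (intro tendsto_intros u_lim)
  moreover have "(\<lambda>k. t k * (norm (u k))\<^sup>2) \<longlonglongrightarrow> 0 * (norm v)\<^sup>2"
    by (intro tendsto_intros t_lim u_lim)
  ultimately have "2 * ((z - p) \<bullet> v) \<le> 0 * (norm v)\<^sup>2"
    using step by (blast intro: LIMSEQ_le)
  then show "(z - p) \<bullet> v \<le> 0"
    by simp
qed

lemma prox_regular_proj_set_norm_diff_le:
  fixes Z :: "'a::euclidean_space set"
  assumes prox: "prox_regular \<alpha> Z"
    and p1: "p1 \<in> proj_set Z z1" and p2: "p2 \<in> proj_set Z z2"
  shows "(1 - \<alpha> * (infdist z1 Z + infdist z2 Z)) * norm (p1 - p2) \<le> norm (z1 - z2)"
proof -
  have prox_ineq: "\<And>x \<eta> y. x \<in> Z \<Longrightarrow> \<eta> \<in> normal_cone Z x \<Longrightarrow> y \<in> Z \<Longrightarrow>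
      \<eta> \<bullet> (y - x) \<le> \<alpha> * norm \<eta> * (norm (y - x))\<^sup>2"
    using prox by (simp add: prox_regular_def)
  have Z1: "p1 \<in> Z" "norm (z1 - p1) = infdist z1 Z" and Z2: "p2 \<in> Z" "norm (z2 - p2) = infdist z2 Z"
    using p1 p2 by (auto simp: proj_set_def)
  have "(z1 - p1) \<bullet> (p2 - p1) \<le> \<alpha> * infdist z1 Z * (norm (p1 - p2))\<^sup>2"
    using prox_ineq[OF Z1(1) proj_set_in_normal_cone[OF p1] Z2(1)] Z1(2) by (simp add: norm_minus_commute)
  moreover have "(z2 - p2) \<bullet> (p1 - p2) \<le> \<alpha> * infdist z2 Z * (norm (p1 - p2))\<^sup>2"
    using prox_ineq[OF Z2(1) proj_set_in_normal_cone[OF p2] Z1(1)] Z2(2) by simp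
  moreover have "(z1 - p1) \<bullet> (p2 - p1) + (z2 - p2) \<bullet> (p1 - p2)
      = (norm (p1 - p2))\<^sup>2 - (z1 - z2) \<bullet> (p1 - p2)"
    by (simp add: power2_norm_eq_inner inner_diff_left inner_diff_right algebra_simps)
  ultimately have "(1 - \<alpha> * (infdist z1 Z + infdist z2 Z)) * (norm (p1 - p2))\<^sup>2
      \<le> (z1 - z2) \<bullet> (p1 - p2)"
    by (simp add: algebra_simps)
  also have "\<dots> \<le> norm (z1 - z2) * norm (p1 - p2)"
    by (rule norm_cauchy_schwarz)
  finally show ?thesis
    by (cases "p1 = p2") (auto simp: power2_eq_square mult_le_cancel_right)
qed

text \<open>A junk value wherever \<^const>\<open>proj_set\<close> is not a singleton.\<close>

definition nearest_point :: "'a::euclidean_space set \<Rightarrow> 'a \<Rightarrow> 'a" where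
  "nearest_point Z z = (THE p. p \<in> proj_set Z z)"

lemma prox_regular_proj_set_eq_singleton:
  fixes Z :: "'a::euclidean_space set"
  assumes prox: "prox_regular \<alpha> Z" and "Z \<noteq> {}" and near: "2 * \<alpha> * infdist z Z < 1"
  shows "proj_set Z z = {nearest_point Z z}"
proof -
  have "closed Z"
    using prox by (simp add: prox_regular_def clarke_regular_def)
  then obtain p where p: "p \<in> proj_set Z z"
    using proj_set_nonempty[OF _ \<open>Z \<noteq> {}\<close>] by blast
  have unique: "q = p" if "q \<in> proj_set Z z" for q
  proof -
    have "(1 - 2 * \<alpha> * infdist z Z) * norm (q - p) \<le> 0"
      using prox_regular_proj_set_norm_diff_le[OF prox that p] by (simp add: ac_simps)
    then show ?thesis
      using near by (simp add: mult_le_0_iff)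
  qed
  then have "nearest_point Z z = p"
    unfolding nearest_point_def using p by blast
  then show ?thesis
    using p unique by blast
qed

lemma prox_regular_lipschitz_on_nearest_point:
  fixes Z :: "'a::euclidean_space set"
  assumes prox: "prox_regular \<alpha> Z" and "Z \<noteq> {}" and "c > 0"
  shows "(1 / c)-lipschitz_on {z. 2 * \<alpha> * infdist z Z \<le> 1 - c} (nearest_point Z)"
proof (rule lipschitz_onI)
  fix z1 z2 assume z1: "z1 \<in> {z. 2 * \<alpha> * infdist z Z \<le> 1 - c}"
    and z2: "z2 \<in> {z. 2 * \<alpha> * infdist z Z \<le> 1 - c}"
  have "proj_set Z z1 = {nearest_point Z z1}" "proj_set Z z2 = {nearest_point Z z2}"
    using z1 z2 \<open>c > 0\<close> by (auto intro!: prox_regular_proj_set_eq_singleton[OF prox \<open>Z \<noteq> {}\<close>])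
  then have "(1 - \<alpha> * (infdist z1 Z + infdist z2 Z)) * dist (nearest_point Z z1) (nearest_point Z z2)
      \<le> dist z1 z2"
    using prox_regular_proj_set_norm_diff_le[OF prox] by (simp add: dist_norm)
  moreover have "c \<le> 1 - \<alpha> * (infdist z1 Z + infdist z2 Z)"
    using z1 z2 by (simp add: algebra_simps)
  ultimately have "c * dist (nearest_point Z z1) (nearest_point Z z2) \<le> dist z1 z2"
    by (meson mult_right_mono order_trans zero_le_dist)
  then show "dist (nearest_point Z z1) (nearest_point Z z2) \<le> 1 / c * dist z1 z2"
    using \<open>c > 0\<close> by (simp add: field_simps)
qed (use \<open>c > 0\<close> in simp)

lemma prox_regular_continuous_on_nearest_point:
  fixes Z :: "'a::euclidean_space set"
  assumes "prox_regular \<alpha> Z" and "Z \<noteq> {}"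
  shows "continuous_on {z. 2 * \<alpha> * infdist z Z < 1} (nearest_point Z)"
proof (rule continuous_at_imp_continuous_on, clarify)
  fix z assume "2 * \<alpha> * infdist z Z < 1"
  define c where "c = (1 - 2 * \<alpha> * infdist z Z) / 2"
  have "c > 0"
    using \<open>2 * \<alpha> * infdist z Z < 1\<close> by (simp add: c_def)
  have "open {y. 2 * \<alpha> * infdist y Z < 1 - c}"
    by (intro open_Collect_less continuous_intros)
  moreover have "2 * \<alpha> * infdist z Z < 1 - c"
    using \<open>c > 0\<close> by (simp add: c_def field_simps)
  ultimately have "z \<in> interior {y. 2 * \<alpha> * infdist y Z \<le> 1 - c}"
    by (auto intro: interiorI[of "{y. 2 * \<alpha> * infdist y Z < 1 - c}"])
  then show "isCont (nearest_point Z) z"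
    using continuous_on_interior lipschitz_on_continuous_on
      prox_regular_lipschitz_on_nearest_point[OF assms \<open>c > 0\<close>] by blast
qed

lemma prox_regular_continuous_on_image_nearest_point:
  fixes Z :: "'a::euclidean_space set" and f :: "'a \<Rightarrow> 'a \<Rightarrow> 'b::topological_space"
  assumes prox: "prox_regular \<alpha> Z" and "Z \<noteq> {}"
    and f: "continuous_on (UNIV \<times> Z) (\<lambda>(z, p). f z p)"
  shows "continuous_on {z. 2 * \<alpha> * infdist z Z < 1} (\<lambda>z. f z (nearest_point Z z))"
proof -
  let ?S = "{z. 2 * \<alpha> * infdist z Z < 1}"
  have "nearest_point Z z \<in> Z" if "z \<in> ?S" for z
    using prox_regular_proj_set_eq_singleton[OF prox \<open>Z \<noteq> {}\<close>, of z] that proj_set_subset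
    by auto
  then have "(\<lambda>z. (z, nearest_point Z z)) ` ?S \<subseteq> UNIV \<times> Z"
    by blast
  moreover have "continuous_on ?S (\<lambda>z. (z, nearest_point Z z))"
    by (intro continuous_on_Pair continuous_on_id
        prox_regular_continuous_on_nearest_point[OF prox \<open>Z \<noteq> {}\<close>])
  ultimately have "continuous_on ?S (\<lambda>z. (\<lambda>(z, p). f z p) (z, nearest_point Z z))"
    using continuous_on_compose2[OF f] by blast
  then show ?thesis
    by simp
qed

lemma locally_bounded_image_proj_set:
  fixes Z :: "'a::euclidean_space set" and f :: "'a \<Rightarrow> 'a \<Rightarrow> 'b::metric_space"
  assumes "closed Z" and f: "continuous_on (UNIV \<times> Z) (\<lambda>(z, p). f z p)"
  shows "locally_bounded (\<lambda>z. (\<lambda>p. f z p) ` proj_set Z z)"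
  unfolding locally_bounded_def
proof
  fix x :: 'a
  let ?graph = "{(z, p). z \<in> cball x 1 \<and> p \<in> proj_set Z z}"
  have "?graph \<subseteq> UNIV \<times> Z"
    using proj_set_subset by blast
  then have "compact ((\<lambda>(z, p). f z p) ` ?graph)"
    by (intro compact_continuous_image compact_proj_set_graph \<open>closed Z\<close> compact_cball
        continuous_on_subset[OF f])
  moreover have "(\<Union>z \<in> ball x 1. (\<lambda>p. f z p) ` proj_set Z z) \<subseteq> (\<lambda>(z, p). f z p) ` ?graph"
    by force
  ultimately show "\<exists>e>0. bounded (\<Union>z \<in> ball x e. (\<lambda>p. f z p) ` proj_set Z z)"
    by (meson bounded_subset compact_imp_bounded zero_less_one)
qed

lemma outer_semicontinuous_image_proj_set:
  fixes Z :: "'a::euclidean_space set" and f :: "'a \<Rightarrow> 'a \<Rightarrow> 'b::metric_space"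
  assumes "closed Z" and f: "continuous_on (UNIV \<times> Z) (\<lambda>(z, p). f z p)"
  shows "outer_semicontinuous (\<lambda>z. (\<lambda>p. f z p) ` proj_set Z z)"
  unfolding outer_semicontinuous_def
proof (intro allI impI)
  fix x :: 'a and y :: 'b and xs :: "nat \<Rightarrow> 'a" and ys :: "nat \<Rightarrow> 'b"
  assume xs: "xs \<longlonglongrightarrow> x" and ys: "ys \<longlonglongrightarrow> y"
    and "\<forall>i. ys i \<in> (\<lambda>p. f (xs i) p) ` proj_set Z (xs i)"
  then have "\<forall>i. \<exists>p. p \<in> proj_set Z (xs i) \<and> ys i = f (xs i) p"
    by blast
  then obtain ps where ps: "\<And>i. ps i \<in> proj_set Z (xs i)" and ys_eq: "\<And>i. ys i = f (xs i) (ps i)"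
    by metis
  let ?graph = "{(z, p). z \<in> insert x (range xs) \<and> p \<in> proj_set Z z}"
  have "seq_compact ?graph"
    by (intro compact_imp_seq_compact compact_proj_set_graph \<open>closed Z\<close>
        compact_sequence_with_limit xs)
  moreover have "\<forall>i. (xs i, ps i) \<in> ?graph"
    using ps by auto
  ultimately obtain l r where l: "l \<in> ?graph" and r: "strict_mono r"
    and lim: "((\<lambda>i. (xs i, ps i)) \<circ> r) \<longlonglongrightarrow> l"
    by (rule seq_compactE)
  obtain a b where ab: "l = (a, b)"
    by fastforce
  have "(xs \<circ> r) \<longlonglongrightarrow> a"
    using tendsto_fst[OF lim] ab by (simp add: o_def)
  moreover have "(xs \<circ> r) \<longlonglongrightarrow> x"
    by (rule LIMSEQ_subseq_LIMSEQ[OF xs r])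
  ultimately have "a = x"
    by (rule LIMSEQ_unique)
  have "(\<lambda>i. (\<lambda>(z, p). f z p) (((\<lambda>i. (xs i, ps i)) \<circ> r) i)) \<longlonglongrightarrow> (\<lambda>(z, p). f z p) l"
    using l ps proj_set_subset
    by (intro continuous_on_tendsto_compose[OF f lim]) (auto simp: proj_set_def)
  then have "(ys \<circ> r) \<longlonglongrightarrow> f x b"
    using ab \<open>a = x\<close> by (simp add: o_def ys_eq)
  moreover have "(ys \<circ> r) \<longlonglongrightarrow> y"
    by (rule LIMSEQ_subseq_LIMSEQ[OF ys r])
  ultimately have "y = f x b"
    using LIMSEQ_unique by blast
  moreover have "b \<in> proj_set Z x"
    using l ab \<open>a = x\<close> by simp
  ultimately show "y \<in> (\<lambda>p. f x p) ` proj_set Z x"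
    by blast
qed

lemma infdist_less_if_mem_UN_ball:
  assumes "z \<in> (\<Union>x \<in> Z. ball x r)"
  shows "infdist z Z < r"
  using assms by (auto intro: le_less_trans[OF infdist_le] simp: dist_commute)

theorem lemma3p1:
  fixes Z :: "(real ^ 'n) set"
    and f :: "real ^ 'n \<Rightarrow> real ^ 'n \<Rightarrow> real ^ 'n"
  assumes "closed Z"
    and "continuous_on (UNIV \<times> Z) (\<lambda>(z, p). f z p)"
  shows "locally_bounded (\<lambda>z. (\<lambda>p. f z p) ` proj_set Z z)
       \<and> outer_semicontinuous (\<lambda>z. (\<lambda>p. f z p) ` proj_set Z z)
       \<and> (\<forall>\<alpha> > 0. prox_regular \<alpha> Z \<longrightarrow>
            ((\<forall>z \<in> (\<Union>x \<in> Z. ball x (1 / (2 * \<alpha>))). \<exists>!y. y \<in> (\<lambda>p. f z p) ` proj_set Z z)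
             \<and> continuous_on (\<Union>x \<in> Z. ball x (1 / (2 * \<alpha>)))
                 (\<lambda>z. THE y. y \<in> (\<lambda>p. f z p) ` proj_set Z z)))"
proof (intro conjI allI impI)
  show "locally_bounded (\<lambda>z. (\<lambda>p. f z p) ` proj_set Z z)"
    using locally_bounded_image_proj_set[OF assms] .
  show "outer_semicontinuous (\<lambda>z. (\<lambda>p. f z p) ` proj_set Z z)"
    using outer_semicontinuous_image_proj_set[OF assms] .
  fix \<alpha> :: real assume "\<alpha> > 0" and prox: "prox_regular \<alpha> Z"
  define U where "U = (\<Union>x \<in> Z. ball x (1 / (2 * \<alpha>)))"
  have U_near: "Z \<noteq> {} \<and> 2 * \<alpha> * infdist z Z < 1" if "z \<in> U" for z
    using that infdist_less_if_mem_UN_ball[OF that[unfolded U_def]] \<open>\<alpha> > 0\<close>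
    by (auto simp: U_def field_simps)
  have image_eq: "(\<lambda>p. f z p) ` proj_set Z z = {f z (nearest_point Z z)}" if "z \<in> U" for z
    using prox_regular_proj_set_eq_singleton[OF prox] U_near[OF that] by simp
  then show "\<forall>z \<in> U. \<exists>!y. y \<in> (\<lambda>p. f z p) ` proj_set Z z"
    by simp
  have "continuous_on U (\<lambda>z. f z (nearest_point Z z))"
  proof (cases "Z = {}")
    case False
    show ?thesis
      using U_near by (blast intro: continuous_on_subset
          prox_regular_continuous_on_image_nearest_point[OF prox False assms(2)])
  qed (simp add: U_def)
  then show "continuous_on U (\<lambda>z. THE y. y \<in> (\<lambda>p. f z p) ` proj_set Z z)"
    by (rule continuous_on_eq) (simp add: image_eq)
qed

end
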